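(* Let $m,n\ge2$, $\lambda>0$, $C\in\mathbb{R}^{m\times n}$, let $a\in\Delta_m$, $b\in\Delta_n$ have strictly positive entries, let $P=S_\lambda(C,a,b)$, and let $G\in\mathbb{R}^{m\times n}$. Consider the following procedure (Algorithm 1): 1. $T\leftarrow P\odot G$; 2. $\tilde T\leftarrow T_{:,1:n-1}$, $\tilde P\leftarrow P_{:,1:n-1}\in\mathbb{R}^{m\times(n-1)}$; 3. $t^{(a)}\leftarrow T\mathbb{1}_n$, $\tilde t^{(b)}\leftarrow\tilde T^\top\mathbb{1}_m$; 4. $\begin{bmatrix}g_a\\ g_{\tilde b}\end{bmatrix}\leftarrow\begin{bmatrix}\mathrm{diag}(a) & \tilde P\\ \tilde P^\top & \mathrm{diag}(\tilde b)\end{bmatrix}^{-1}\begin{bmatrix}t^{(a)}\\ \tilde t^{(b)}\end{bmatrix}$; 5. $g_b\leftarrow[g_{\tilde b};0]\in\mathbb{R}^n$; 6. $U\leftarrow g_a\mathbb{1}_n^\top+\mathbb{1}_m g_b^\top$; 7. $G_C\leftarrow-\lambda^{-1}(T-P\odot U)$. Then the $(m+n-1)\times(m+n-1)$ matrix in step 4 is invertible, and $(x,y)=(\mathrm{vec}(G_C),[g_a;g_{\tilde b}])$ is the (unique) solution of $$\begin{bmatrix}\lambda\,\mathrm{diag}(p)^{-1} & \tilde E\\ \tilde E^\top & \mathbf{0}\end{bmatrix}\begin{bmatrix}x\\ -y\end{bmatrix}=\begin{bmatrix}-\mathrm{vec}(G)\\ \mathbf{0}\end{bmatrix},\quad p=\mathrm{vec}(P).$$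 Consequently, if $G=\nabla_P\ell$ for a loss $\ell$ depending on $(C,a,b)$ only through $P=S_\lambda(C,a,b)$ (as in Theorem 1), then $G_C=\nabla_C\ell$, $g_a=\nabla_a\ell$ and $g_{\tilde b}=\nabla_{\tilde b}\ell$.
   Context: $\Delta_m=\{a\in\mathbb{R}^m: a_i\ge 0,\ \sum_i a_i=1\}$; $\Pi(a,b)=\{P\in\mathbb{R}^{m\times n}_{\ge0}: P\mathbb{1}_n=a,\ P^\top\mathbb{1}_m=b\}$; $h(P)=-\sum_{i,j}P_{i,j}(\log P_{i,j}-1)$; $S_\lambda(C,a,b)=\arg\min_{P\in\Pi(a,b)}\langle P,C\rangle_F-\lambda h(P)$. $\odot$ is the entrywise (Hadamard) product, $\mathbb{1}_k$ the all-ones vector in $\mathbb{R}^k$. For $v\in\mathbb{R}^n$, $\tilde v=(v_1,\dots,v_{n-1})$. Vectorization is column-major ($\mathrm{vec}(X)_{(j-1)m+i}=X_{i,j}$). $E=[\mathbb{1}_n\otimes I_m,\ I_n\otimes\mathbb{1}_m]\in\mathbb{R}^{mn\times(m+n)}$ and $\tilde E$ is $E$ with its last column deleted. Theorem 1: for the implicit map $(c,a,\tilde b)\mapsto p$ defined by the KKT conditions of the Sinkhorn problem (with the last column-marginal constraint dropped and $\beta_n=0$), the gradients of $\ell=L(p)$ satisfy $\begin{bmatrix}\lambda\mathrm{diag}(p)^{-1}&\tilde E\\ \tilde E^\top&0\end{bmatrix}\begin{bmatrix}\nabla_c\ell\\-\nabla_{[a;\tilde b]}\ell\end{bmatrix}=\begin{bmatrix}-\nabla_p\ell\\0\end{bmatrix}$.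 *)

theory Defs
  imports "Jordan_Normal_Form.Matrix"
begin

definition in_simplex :: "nat \<Rightarrow> real vec \<Rightarrow> bool" where
  "in_simplex k a \<longleftrightarrow> dim_vec a = k \<and> (\<forall>i<k. a $ i \<ge> 0) \<and> (\<Sum>i<k. a $ i) = 1"

definition transport_polytope :: "real vec \<Rightarrow> real vec \<Rightarrow> real mat set" where
  "transport_polytope a b = {P. P \<in> carrier_mat (dim_vec a) (dim_vec b)
      \<and> (\<forall>i<dim_vec a. \<forall>j<dim_vec b. P $$ (i,j) \<ge> 0)
      \<and> (\<forall>i<dim_vec a. (\<Sum>j<dim_vec b. P $$ (i,j)) = a $ i)
      \<and> (\<forall>j<dim_vec b. (\<Sum>i<dim_vec a. P $$ (i,j)) = b $ j)}"

definition entropy :: "real mat \<Rightarrow> real" where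
  "entropy P = - (\<Sum>i<dim_row P. \<Sum>j<dim_col P. P $$ (i,j) * (ln (P $$ (i,j)) - 1))"

definition frob_inner :: "real mat \<Rightarrow> real mat \<Rightarrow> real" where
  "frob_inner P C = (\<Sum>i<dim_row P. \<Sum>j<dim_col P. P $$ (i,j) * C $$ (i,j))"

definition is_sinkhorn_solution :: "real \<Rightarrow> real mat \<Rightarrow> real vec \<Rightarrow> real vec \<Rightarrow> real mat \<Rightarrow> bool" where
  "is_sinkhorn_solution lam C a b P \<longleftrightarrow> P \<in> transport_polytope a b \<and>
     (\<forall>Q\<in>transport_polytope a b.
        frob_inner P C - lam * entropy P \<le> frob_inner Q C - lam * entropy Q)"

definition vec_cm :: "real mat \<Rightarrow> real vec" where
  "vec_cm X = vec (dim_row X * dim_col X) (\<lambda>k. X $$ (k mod dim_row X, k div dim_row X))"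

definition diag_of :: "real vec \<Rightarrow> real mat" where
  "diag_of v = mat (dim_vec v) (dim_vec v) (\<lambda>(i,j). if i = j then v $ i else 0)"

(* E = [1_n (x) I_m, I_n (x) 1_m] in R^{mn x (m+n)}; E_tilde drops the last column *)
definition E_mat :: "nat \<Rightarrow> nat \<Rightarrow> real mat" where
  "E_mat m n = mat (m*n) (m+n) (\<lambda>(k,c).
      if c < m then (if k mod m = c then 1 else 0)
      else (if k div m = c - m then 1 else 0))"

definition E_tilde :: "nat \<Rightarrow> nat \<Rightarrow> real mat" where
  "E_tilde m n = mat (m*n) (m+n-1) (\<lambda>(k,c). E_mat m n $$ (k,c))"

definition mat_inv :: "real mat \<Rightarrow> real mat" where
  "mat_inv K = (SOME B. B \<in> carrier_mat (dim_row K) (dim_row K) \<and> inverts_mat K B \<and> inverts_mat B K)"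

definition alg_T :: "real mat \<Rightarrow> real mat \<Rightarrow> real mat" where
  "alg_T P G = mat (dim_row P) (dim_col P) (\<lambda>(i,j). P $$ (i,j) * G $$ (i,j))"

definition alg_K :: "real mat \<Rightarrow> real vec \<Rightarrow> real vec \<Rightarrow> real mat" where
  "alg_K P a b = (let m = dim_row P; n = dim_col P;
      Pt = mat m (n-1) (\<lambda>(i,j). P $$ (i,j));
      bt = vec (n-1) (\<lambda>j. b $ j)
    in four_block_mat (diag_of a) Pt (transpose_mat Pt) (diag_of bt))"

definition alg_rhs :: "real mat \<Rightarrow> real mat \<Rightarrow> real vec" where
  "alg_rhs P G = (let m = dim_row P; n = dim_col P; T = alg_T P G
     in vec m (\<lambda>i. \<Sum>j<n. T $$ (i,j)) @\<^sub>v vec (n-1) (\<lambda>j. \<Sum>i<m. T $$ (i,j)))"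

definition alg_g :: "real mat \<Rightarrow> real vec \<Rightarrow> real vec \<Rightarrow> real mat \<Rightarrow> real vec" where
  "alg_g P a b G = mat_inv (alg_K P a b) *\<^sub>v alg_rhs P G"

definition alg_GC :: "real \<Rightarrow> real mat \<Rightarrow> real vec \<Rightarrow> real vec \<Rightarrow> real mat \<Rightarrow> real mat" where
  "alg_GC lam P a b G = (let m = dim_row P; n = dim_col P; g = alg_g P a b G;
      ga = vec m (\<lambda>i. g $ i);
      gb = vec n (\<lambda>j. if j < n - 1 then g $ (m + j) else 0);
      U = mat m n (\<lambda>(i,j). ga $ i + gb $ j);
      T = alg_T P G
    in mat m n (\<lambda>(i,j). - (1/lam) * (T $$ (i,j) - P $$ (i,j) * U $$ (i,j))))"

definition KKT_mat :: "real \<Rightarrow> real mat \<Rightarrow> real mat" where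
  "KKT_mat lam P = (let m = dim_row P; n = dim_col P; p = vec_cm P
     in four_block_mat (mat (m*n) (m*n) (\<lambda>(i,j). if i = j then lam / (p $ i) else 0))
          (E_tilde m n) (transpose_mat (E_tilde m n)) (0\<^sub>m (m+n-1) (m+n-1)))"

end

(* The Sinkhorn plan P is entrywise positive: at a zero entry (i,j), moving mass t around a cycle
   (i,j), (i,j'), (i',j'), (i',j) keeps both marginals and changes the objective by
   t (c + lam ln t + O(1)), which is negative for small t > 0.
   With p > 0 the first block row of the KKT system forces x = vec (P .* (U - G)) / lam, where
   U = y_a 1^T + 1 [y_b; 0]^T is built from y = [y_a; y_b], and the second block row says that the
   row sums and the first n - 1 column sums of P .* (U - G) vanish. As P has marginals a and b, this
   is precisely the linear system of step 4 for y. Finally y . K y = sum_ij P_ij U_ij^2, so K has a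
   trivial kernel and is invertible, and the KKT solution exists and is unique. *)

theory Submission
  imports Defs "Jordan_Normal_Form.Determinant"
begin

lemma sum_lessThan_add: "(\<Sum>c<m + k. f c) = (\<Sum>c<m. f c) + (\<Sum>j<k. f (m + j :: nat))"
  by (induction k) (simp_all add: add.assoc)

lemma mod_div_less_if_less_mult:
  fixes k m n :: nat
  assumes "k < m * n"
  shows "k mod m < m" and "k div m < n"
  using assms by (cases "m = 0"; simp add: less_mult_imp_div_less mult.commute)+

lemma sum_lessThan_mult_mod_div:
  "(\<Sum>k<m * n. f (k mod m) (k div m)) = (\<Sum>i<m. \<Sum>j<n. f i j)" for m n :: nat
proof -
  have "(\<Sum>k<m * n. f (k mod m) (k div m)) = (\<Sum>(i,j)\<in>{..<m} \<times> {..<n}. f i j)"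
  proof (rule sum.reindex_bij_witness[where i = "\<lambda>(i,j). j * m + i" and j = "\<lambda>k. (k mod m, k div m)"])
    fix ij assume "ij \<in> {..<m} \<times> {..<n}"
    then obtain i j where ij: "ij = (i,j)" "i < m" "j < n" by auto
    have "j * m + i < (j + 1) * m" using ij by simp
    also have "\<dots> \<le> n * m" using ij by (intro mult_right_mono) auto
    finally show "(case ij of (i,j) \<Rightarrow> j * m + i) \<in> {..<m * n}" using ij by (simp add: mult.commute)
  qed (auto simp: mod_div_less_if_less_mult)
  then show ?thesis by (simp add: sum.cartesian_product)
qed

lemma sum_of_bool_diff:
  fixes f :: "nat \<Rightarrow> 'a::ring_1"
  assumes "i < m" "i' < m"
  shows "(\<Sum>k<m. (of_bool (k = i) - of_bool (k = i')) * f k) = f i - f i'"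
  using assms by (simp add: left_diff_distrib sum_subtractf)

lemma sum_mult_if_less_pred:
  fixes n :: nat and f g :: "nat \<Rightarrow> 'a::semiring_0"
  shows "n \<ge> 1 \<Longrightarrow> (\<Sum>j<n. f j * (if j < n - 1 then g j else 0)) = (\<Sum>j<n - 1. f j * g j)"
  by (cases n) (auto simp: lessThan_Suc intro!: sum.cong)

lemma exists_pos_of_sum_pos:
  fixes f :: "nat \<Rightarrow> 'a::{ordered_comm_monoid_add, linorder}"
  assumes "(\<Sum>k<n. f k) > 0"
  obtains k where "k < n" "f k > 0"
  using assms sum_nonpos[of "{..<n}" f] by (meson lessThan_iff not_le)

lemma sum_sum_nonneg_eq_0D:
  fixes f :: "'a \<Rightarrow> 'b \<Rightarrow> 'c::ordered_comm_monoid_add"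
  assumes "finite A" "finite B" and "(\<Sum>i\<in>A. \<Sum>j\<in>B. f i j) = 0"
    and "\<And>i j. i \<in> A \<Longrightarrow> j \<in> B \<Longrightarrow> 0 \<le> f i j" and "i \<in> A" "j \<in> B"
  shows "f i j = 0"
proof -
  have "(\<Sum>p\<in>A \<times> B. case_prod f p) = 0"
    using assms(1-3) by (simp add: sum.cartesian_product)
  then have "\<forall>p\<in>A \<times> B. case_prod f p = 0"
    using assms(1,2,4) by (subst (asm) sum_nonneg_eq_0_iff) auto
  with assms(5,6) show ?thesis by auto
qed

lemma eq_vec_blockI:
  assumes "dim_vec v = m + k" "dim_vec w = m + k"
    and "\<And>i. i < m \<Longrightarrow> v $ i = w $ i" and "\<And>j. j < k \<Longrightarrow> v $ (m + j) = w $ (m + j)"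
  shows "v = w"
proof (rule eq_vecI)
  fix r assume r: "r < dim_vec w"
  show "v $ r = w $ r"
  proof (cases "r < m")
    case False
    then have "r = m + (r - m)" "r - m < k" using r assms(2) by auto
    then show ?thesis using assms(4) by metis
  qed (use assms(3) in simp)
qed (use assms in simp)

lemma index_mult_mat_vec_sum:
  "i < dim_row A \<Longrightarrow> dim_col A = dim_vec v \<Longrightarrow> (A *\<^sub>v v) $ i = (\<Sum>c<dim_vec v. A $$ (i,c) * v $ c)"
  by (simp add: scalar_prod_def atLeast0LessThan)

lemma index_vec_cm [simp]:
  "k < dim_row X * dim_col X \<Longrightarrow> vec_cm X $ k = X $$ (k mod dim_row X, k div dim_row X)"
  "dim_vec (vec_cm X) = dim_row X * dim_col X"
  unfolding vec_cm_def by auto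

lemma scalar_prod_vec_cm:
  assumes "X \<in> carrier_mat m n" "Y \<in> carrier_mat m n"
  shows "vec_cm X \<bullet> vec_cm Y = (\<Sum>i<m. \<Sum>j<n. X $$ (i,j) * Y $$ (i,j))"
  using assms sum_lessThan_mult_mod_div[of "\<lambda>i j. X $$ (i,j) * Y $$ (i,j)" m n]
  by (simp add: scalar_prod_def atLeast0LessThan)

lemma invertible_mat_if_trivial_kernel:
  fixes K :: "'a :: field mat"
  assumes K: "K \<in> carrier_mat N N"
    and ker: "\<And>v. v \<in> carrier_vec N \<Longrightarrow> K *\<^sub>v v = 0\<^sub>v N \<Longrightarrow> v = 0\<^sub>v N"
  shows "invertible_mat K"
proof -
  have "det K \<noteq> 0"
  proof
    assume "det K = 0"
    then obtain v where "v \<in> carrier_vec N" "v \<noteq> 0\<^sub>v N" "K *\<^sub>v v = 0\<^sub>v N"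
      using det_0_iff_vec_prod_zero_field[OF K] by auto
    with ker show False by simp
  qed
  from det_non_zero_imp_unit[OF K this, of "()"]
  obtain B where "B \<in> carrier_mat N N" "B * K = 1\<^sub>m N" "K * B = 1\<^sub>m N"
    unfolding Units_def ring_mat_def by auto
  with K have "square_mat K" "inverts_mat K B" "inverts_mat B K"
    unfolding inverts_mat_def by auto
  then show ?thesis unfolding invertible_mat_def by blast
qed

lemma mat_inv_inverts:
  assumes "invertible_mat K"
  shows "mat_inv K \<in> carrier_mat (dim_row K) (dim_row K)"
    and "K * mat_inv K = 1\<^sub>m (dim_row K)" and "mat_inv K * K = 1\<^sub>m (dim_row K)"
proof -
  let ?N = "dim_row K"
  obtain B where B: "inverts_mat K B" "inverts_mat B K" and sq: "dim_col K = ?N"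
    using assms unfolding invertible_mat_def by auto
  have "dim_col B = ?N" using arg_cong[OF B(1)[unfolded inverts_mat_def], of dim_col] by simp
  moreover have "dim_row B = ?N" using arg_cong[OF B(2)[unfolded inverts_mat_def], of dim_col] sq by simp
  ultimately have "B \<in> carrier_mat ?N ?N" by (intro carrier_matI)
  with B have "\<exists>B. B \<in> carrier_mat ?N ?N \<and> inverts_mat K B \<and> inverts_mat B K" by blast
  then have "mat_inv K \<in> carrier_mat ?N ?N \<and> inverts_mat K (mat_inv K) \<and> inverts_mat (mat_inv K) K"
    unfolding mat_inv_def by (rule someI_ex)
  then show "mat_inv K \<in> carrier_mat ?N ?N" "K * mat_inv K = 1\<^sub>m ?N" "mat_inv K * K = 1\<^sub>m ?N"
    unfolding inverts_mat_def by auto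
qed

lemma mat_inv_mult_vec_iff:
  assumes K: "invertible_mat K" and y: "dim_vec y = dim_row K" and r: "dim_vec r = dim_row K"
  shows "y = mat_inv K *\<^sub>v r \<longleftrightarrow> K *\<^sub>v y = r"
proof -
  let ?N = "dim_row K"
  note B = mat_inv_inverts[OF K]
  have Kc: "K \<in> carrier_mat ?N ?N" using K unfolding invertible_mat_def square_mat.simps by auto
  have yc: "y \<in> carrier_vec ?N" and rc: "r \<in> carrier_vec ?N" using y r by (auto intro: carrier_vecI)
  show ?thesis
  proof
    assume "y = mat_inv K *\<^sub>v r"
    then have "K *\<^sub>v y = (K * mat_inv K) *\<^sub>v r"
      using assoc_mult_mat_vec[OF Kc B(1) rc] by simp
    then show "K *\<^sub>v y = r" using B(2) rc by simp
  next
    assume "K *\<^sub>v y = r"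
    then have "mat_inv K *\<^sub>v r = (mat_inv K * K) *\<^sub>v y"
      using assoc_mult_mat_vec[OF B(1) Kc yc] by simp
    then show "y = mat_inv K *\<^sub>v r" using B(3) yc by simp
  qed
qed

section \<open>Positivity of the Sinkhorn plan\<close>

lemma transport_polytopeD:
  assumes "P \<in> transport_polytope a b"
  shows "P \<in> carrier_mat (dim_vec a) (dim_vec b)"
    and "\<And>i j. i < dim_vec a \<Longrightarrow> j < dim_vec b \<Longrightarrow> P $$ (i,j) \<ge> 0"
    and "\<And>i. i < dim_vec a \<Longrightarrow> (\<Sum>j<dim_vec b. P $$ (i,j)) = a $ i"
    and "\<And>j. j < dim_vec b \<Longrightarrow> (\<Sum>i<dim_vec a. P $$ (i,j)) = b $ j"
  using assms unfolding transport_polytope_def by auto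

lemma entropy_term_tangent_le:
  fixes x y :: real
  assumes "y > 0" "x \<ge> 0"
  shows "y * (ln y - 1) - x * (ln x - 1) \<le> ln y * (y - x)"
proof (cases "x = 0")
  case False
  with assms have "x * ln (y / x) \<le> x * (y / x - 1)"
    by (intro mult_left_mono ln_le_minus_one) auto
  with False assms show ?thesis by (simp add: ln_div algebra_simps)
qed (use assms in simp)

lemma sinkhorn_objective_diff_le:
  assumes X: "X \<in> carrier_mat m n" and Y: "Y \<in> carrier_mat m n" and lam: "lam \<ge> 0"
    and Y_nonneg: "\<And>k l. k < m \<Longrightarrow> l < n \<Longrightarrow> Y $$ (k,l) \<ge> 0"
    and X_pos: "\<And>k l. k < m \<Longrightarrow> l < n \<Longrightarrow> X $$ (k,l) \<noteq> Y $$ (k,l) \<Longrightarrow> X $$ (k,l) > 0"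
  shows "(frob_inner X C - lam * entropy X) - (frob_inner Y C - lam * entropy Y)
    \<le> (\<Sum>k<m. \<Sum>l<n. (X $$ (k,l) - Y $$ (k,l)) * (C $$ (k,l) + lam * ln (X $$ (k,l))))"
proof -
  let ?f = "\<lambda>x::real. x * (ln x - 1)"
  have "(frob_inner X C - lam * entropy X) - (frob_inner Y C - lam * entropy Y)
      = (\<Sum>k<m. \<Sum>l<n. (X $$ (k,l) - Y $$ (k,l)) * C $$ (k,l) + lam * (?f (X $$ (k,l)) - ?f (Y $$ (k,l))))"
    using X Y unfolding frob_inner_def entropy_def
    by (simp add: sum_subtractf[symmetric] sum.distrib[symmetric] sum_distrib_left algebra_simps)
  also have "\<dots> \<le> (\<Sum>k<m. \<Sum>l<n. (X $$ (k,l) - Y $$ (k,l)) * (C $$ (k,l) + lam * ln (X $$ (k,l))))"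
  proof (intro sum_mono)
    fix k l assume "k \<in> {..<m}" "l \<in> {..<n}"
    then have kl: "k < m" "l < n" by auto
    have "?f (X $$ (k,l)) - ?f (Y $$ (k,l)) \<le> ln (X $$ (k,l)) * (X $$ (k,l) - Y $$ (k,l))"
      using entropy_term_tangent_le[OF X_pos Y_nonneg, OF kl _ kl]
      by (cases "X $$ (k,l) = Y $$ (k,l)") auto
    then have "lam * (?f (X $$ (k,l)) - ?f (Y $$ (k,l))) \<le> lam * (ln (X $$ (k,l)) * (X $$ (k,l) - Y $$ (k,l)))"
      using lam by (rule mult_left_mono)
    then show "(X $$ (k,l) - Y $$ (k,l)) * C $$ (k,l) + lam * (?f (X $$ (k,l)) - ?f (Y $$ (k,l)))
        \<le> (X $$ (k,l) - Y $$ (k,l)) * (C $$ (k,l) + lam * ln (X $$ (k,l)))"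
      by (simp add: algebra_simps)
  qed
  finally show ?thesis .
qed

lemma small_step_with_negative_gain:
  fixes c lam \<alpha> \<beta> \<gamma> :: real
  assumes lam: "lam > 0" and "\<alpha> > 0" "\<beta> > 0" "\<gamma> \<ge> 0"
  obtains t where "0 < t" "t < \<alpha>" "t < \<beta>"
    and "c + lam * (ln t + ln (\<gamma> + t) - ln (\<alpha> - t) - ln (\<beta> - t)) < 0"
proof -
  define B where "B = ln (\<gamma> + 1) - ln (\<alpha> / 2) - ln (\<beta> / 2)"
  have "\<forall>\<^sub>F t in at_right 0. ln t < - c / lam - B"
    using ln_at_0 by (simp add: filterlim_at_bot_dense)
  moreover have "\<forall>\<^sub>F t in at_right 0. 0 < t \<and> t < min 1 (min (\<alpha> / 2) (\<beta> / 2))"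
    using assms by (auto simp: eventually_at_right_field intro!: exI[of _ "min 1 (min (\<alpha> / 2) (\<beta> / 2))"])
  ultimately have "\<forall>\<^sub>F t in at_right 0. 0 < t \<and> t < \<alpha> \<and> t < \<beta>
      \<and> c + lam * (ln t + ln (\<gamma> + t) - ln (\<alpha> - t) - ln (\<beta> - t)) < 0"
  proof eventually_elim
    case (elim t)
    have "ln (\<gamma> + t) \<le> ln (\<gamma> + 1)" "ln (\<alpha> / 2) \<le> ln (\<alpha> - t)" "ln (\<beta> / 2) \<le> ln (\<beta> - t)"
      using elim assms by auto
    with elim have "ln t + ln (\<gamma> + t) - ln (\<alpha> - t) - ln (\<beta> - t) < - c / lam"
      unfolding B_def by linarith
    with lam elim show ?case by (simp add: field_simps)
  qed
  then show ?thesis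
    using that eventually_happens'[OF trivial_limit_at_right_real] by blast
qed

definition cycle_perturbation :: "real mat \<Rightarrow> nat \<Rightarrow> nat \<Rightarrow> nat \<Rightarrow> nat \<Rightarrow> real \<Rightarrow> real mat" where
  "cycle_perturbation P i i' j j' t = mat (dim_row P) (dim_col P) (\<lambda>(k,l).
     P $$ (k,l) + t * ((of_bool (k = i) - of_bool (k = i')) * (of_bool (l = j) - of_bool (l = j'))))"

lemma index_cycle_perturbation [simp]:
  "k < dim_row P \<Longrightarrow> l < dim_col P \<Longrightarrow> cycle_perturbation P i i' j j' t $$ (k,l)
     = P $$ (k,l) + t * ((of_bool (k = i) - of_bool (k = i')) * (of_bool (l = j) - of_bool (l = j')))"
  "dim_row (cycle_perturbation P i i' j j' t) = dim_row P"
  "dim_col (cycle_perturbation P i i' j j' t) = dim_col P"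
  unfolding cycle_perturbation_def by auto

lemma cycle_perturbation_in_transport_polytope:
  assumes P: "P \<in> transport_polytope a b"
    and i: "i < dim_vec a" "i' < dim_vec a" and j: "j < dim_vec b" "j' < dim_vec b"
    and "i \<noteq> i'" "j \<noteq> j'" and "0 \<le> t" "t \<le> P $$ (i,j')" "t \<le> P $$ (i',j)"
  shows "cycle_perturbation P i i' j j' t \<in> transport_polytope a b"
proof -
  let ?Q = "cycle_perturbation P i i' j j' t"
  note P_props = transport_polytopeD[OF P]
  have dims: "dim_row P = dim_vec a" "dim_col P = dim_vec b" using P_props(1) by auto
  have "?Q $$ (k,l) \<ge> 0" if "k < dim_vec a" "l < dim_vec b" for k l
    using that assms P_props(2)[OF that] by (auto simp: dims)
  moreover have "(\<Sum>l<dim_vec b. ?Q $$ (k,l)) = a $ k" if "k < dim_vec a" for k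
    using that j P_props(3)[OF that]
    by (simp add: dims sum.distrib sum_distrib_left[symmetric] mult.assoc[symmetric]
        sum_of_bool_diff[where f = "\<lambda>_. 1", simplified])
  moreover have "(\<Sum>k<dim_vec a. ?Q $$ (k,l)) = b $ l" if "l < dim_vec b" for l
    using that i P_props(4)[OF that]
    by (simp add: dims sum.distrib sum_distrib_left[symmetric] sum_distrib_right[symmetric] mult.assoc[symmetric]
        mult.commute[of _ "of_bool (l = j) - of_bool (l = j')"] sum_of_bool_diff[where f = "\<lambda>_. 1", simplified])
  ultimately show ?thesis
    using P_props(1) unfolding transport_polytope_def by (auto simp: dims)
qed

lemma sum_cycle_perturbation_diff:
  assumes P: "P \<in> carrier_mat m n" and "i < m" "i' < m" "j < n" "j' < n"
  shows "(\<Sum>k<m. \<Sum>l<n. (cycle_perturbation P i i' j j' t $$ (k,l) - P $$ (k,l)) * h k l)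
    = t * (h i j - h i j' - h i' j + h i' j')"
proof -
  have "(\<Sum>k<m. \<Sum>l<n. (cycle_perturbation P i i' j j' t $$ (k,l) - P $$ (k,l)) * h k l)
      = t * (\<Sum>k<m. (of_bool (k = i) - of_bool (k = i')) *
               (\<Sum>l<n. (of_bool (l = j) - of_bool (l = j')) * h k l))"
    using P by (simp add: sum_distrib_left mult.assoc)
  also have "\<dots> = t * (\<Sum>k<m. (of_bool (k = i) - of_bool (k = i')) * (h k j - h k j'))"
    using assms by (simp add: sum_of_bool_diff)
  also have "\<dots> = t * (h i j - h i j' - h i' j + h i' j')"
    using assms by (simp add: sum_of_bool_diff)
  finally show ?thesis .
qed

lemma cycle_perturbation_decreases_objective:
  assumes lam: "lam > 0" and P: "P \<in> transport_polytope a b"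
    and i: "i < dim_vec a" "i' < dim_vec a" and j: "j < dim_vec b" "j' < dim_vec b"
    and ne: "i \<noteq> i'" "j \<noteq> j'" and P0: "P $$ (i,j) = 0"
    and t: "0 < t" "t < P $$ (i,j')" "t < P $$ (i',j)"
    and gain: "C $$ (i,j) - C $$ (i,j') - C $$ (i',j) + C $$ (i',j')
      + lam * (ln t + ln (P $$ (i',j') + t) - ln (P $$ (i,j') - t) - ln (P $$ (i',j) - t)) < 0"
  shows "frob_inner (cycle_perturbation P i i' j j' t) C - lam * entropy (cycle_perturbation P i i' j j' t)
    < frob_inner P C - lam * entropy P"
proof -
  define Q where "Q = cycle_perturbation P i i' j j' t"
  note P_props = transport_polytopeD[OF P]
  have dims: "dim_row P = dim_vec a" "dim_col P = dim_vec b" using P_props(1) by auto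
  have Q: "Q \<in> transport_polytope a b"
    unfolding Q_def using t by (intro cycle_perturbation_in_transport_polytope[OF P i j ne]) auto
  have Q_corners: "Q $$ (i,j) = t" "Q $$ (i,j') = P $$ (i,j') - t"
      "Q $$ (i',j) = P $$ (i',j) - t" "Q $$ (i',j') = P $$ (i',j') + t"
    unfolding Q_def using i j ne P0 by (simp_all add: dims)
  have Q_pos: "Q $$ (k,l) > 0" if "k < dim_vec a" "l < dim_vec b" "Q $$ (k,l) \<noteq> P $$ (k,l)" for k l
  proof -
    have "k \<in> {i, i'} \<and> l \<in> {j, j'}" using that unfolding Q_def by (auto simp: dims)
    then show ?thesis using Q_corners t P_props(2)[OF i(2) j(2)] by auto
  qed
  let ?h = "\<lambda>k l. C $$ (k,l) + lam * ln (Q $$ (k,l))"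
  have "(frob_inner Q C - lam * entropy Q) - (frob_inner P C - lam * entropy P)
      \<le> (\<Sum>k<dim_vec a. \<Sum>l<dim_vec b. (Q $$ (k,l) - P $$ (k,l)) * ?h k l)"
    using lam Q_pos by (intro sinkhorn_objective_diff_le transport_polytopeD[OF Q] P_props) auto
  also have "\<dots> = t * (?h i j - ?h i j' - ?h i' j + ?h i' j')"
    unfolding Q_def by (rule sum_cycle_perturbation_diff[OF P_props(1) i(1,2) j(1,2)])
  also have "\<dots> = t * (C $$ (i,j) - C $$ (i,j') - C $$ (i',j) + C $$ (i',j')
      + lam * (ln t + ln (P $$ (i',j') + t) - ln (P $$ (i,j') - t) - ln (P $$ (i',j) - t)))"
    unfolding Q_corners by (simp add: algebra_simps)
  also have "\<dots> < 0" using t gain by (simp add: mult_pos_neg)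
  finally show ?thesis unfolding Q_def by simp
qed

lemma sinkhorn_solution_pos:
  assumes lam: "lam > 0" and a_pos: "\<forall>i<dim_vec a. a $ i > 0" and b_pos: "\<forall>j<dim_vec b. b $ j > 0"
    and sol: "is_sinkhorn_solution lam C a b P"
  shows "\<forall>i<dim_vec a. \<forall>j<dim_vec b. P $$ (i,j) > 0"
proof (rule ccontr)
  have P: "P \<in> transport_polytope a b"
    and opt: "\<And>Q. Q \<in> transport_polytope a b \<Longrightarrow>
      frob_inner P C - lam * entropy P \<le> frob_inner Q C - lam * entropy Q"
    using sol unfolding is_sinkhorn_solution_def by auto
  note P_props = transport_polytopeD[OF P]
  assume "\<not> ?thesis"
  then obtain i j where ij: "i < dim_vec a" "j < dim_vec b" and P0: "P $$ (i,j) = 0"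
    using P_props(2) by (metis less_eq_real_def)
  obtain j' where j': "j' < dim_vec b" "P $$ (i,j') > 0"
    using exists_pos_of_sum_pos P_props(3)[OF ij(1)] a_pos ij(1) by metis
  obtain i' where i': "i' < dim_vec a" "P $$ (i',j) > 0"
    using exists_pos_of_sum_pos P_props(4)[OF ij(2)] b_pos ij(2) by metis
  have ne: "i \<noteq> i'" "j \<noteq> j'" using P0 i' j' by auto
  obtain t where t: "0 < t" "t < P $$ (i,j')" "t < P $$ (i',j)"
    and gain: "C $$ (i,j) - C $$ (i,j') - C $$ (i',j) + C $$ (i',j')
      + lam * (ln t + ln (P $$ (i',j') + t) - ln (P $$ (i,j') - t) - ln (P $$ (i',j) - t)) < 0"
    using small_step_with_negative_gain[OF lam j'(2) i'(2) P_props(2)[OF i'(1) j'(1)]] by blast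
  have "cycle_perturbation P i i' j j' t \<in> transport_polytope a b"
    using t by (intro cycle_perturbation_in_transport_polytope[OF P ij(1) i'(1) ij(2) j'(1) ne]) auto
  then show False
    using opt cycle_perturbation_decreases_objective[OF lam P ij(1) i'(1) ij(2) j'(1) ne P0 t gain]
    by fastforce
qed

section \<open>The linear system of Algorithm 1\<close>

definition potential_mat :: "nat \<Rightarrow> nat \<Rightarrow> real vec \<Rightarrow> real mat" where
  "potential_mat m n y = mat m n (\<lambda>(i,j). y $ i + (if j < n - 1 then y $ (m + j) else 0))"

lemma potential_mat_carrier [simp]: "potential_mat m n y \<in> carrier_mat m n"
  unfolding potential_mat_def by simp

lemma dim_potential_mat [simp]:
  "dim_row (potential_mat m n y) = m" "dim_col (potential_mat m n y) = n"
  unfolding potential_mat_def by simp_all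

lemma index_potential_mat [simp]:
  "i < m \<Longrightarrow> j < n \<Longrightarrow> potential_mat m n y $$ (i,j) = y $ i + (if j < n - 1 then y $ (m + j) else 0)"
  unfolding potential_mat_def by simp

lemma potential_mat_eq_zeroD:
  assumes "m \<ge> 1" "n \<ge> 1" "dim_vec y = m + n - 1" "potential_mat m n y = 0\<^sub>m m n"
  shows "y = 0\<^sub>v (m + n - 1)"
proof (rule eq_vec_blockI[where m = m and k = "n - 1"])
  have U0: "y $ i + (if j < n - 1 then y $ (m + j) else 0) = 0" if "i < m" "j < n" for i j
    using that arg_cong[OF assms(4), of "\<lambda>U. U $$ (i,j)"] by simp
  show y_first: "y $ i = 0\<^sub>v (m + n - 1) $ i" if "i < m" for i
    using that U0[of i "n - 1"] assms by simp
  show "y $ (m + j) = 0\<^sub>v (m + n - 1) $ (m + j)" if "j < n - 1" for j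
    using that U0[of 0 j] y_first[of 0] assms by simp
qed (use assms in auto)

definition reduced_marginals :: "real mat \<Rightarrow> real vec" where
  "reduced_marginals X = vec (dim_row X) (\<lambda>i. \<Sum>j<dim_col X. X $$ (i,j))
     @\<^sub>v vec (dim_col X - 1) (\<lambda>j. \<Sum>i<dim_row X. X $$ (i,j))"

lemma index_reduced_marginals [simp]:
  "i < dim_row X \<Longrightarrow> reduced_marginals X $ i = (\<Sum>j<dim_col X. X $$ (i,j))"
  "dim_row X = m \<Longrightarrow> j < dim_col X - 1 \<Longrightarrow> reduced_marginals X $ (m + j) = (\<Sum>i<m. X $$ (i,j))"
  "dim_vec (reduced_marginals X) = dim_row X + (dim_col X - 1)"
  unfolding reduced_marginals_def by simp_all

lemma reduced_marginals_smult:
  assumes "X \<in> carrier_mat m n"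
  shows "reduced_marginals (c \<cdot>\<^sub>m X) = c \<cdot>\<^sub>v reduced_marginals X"
  by (rule eq_vec_blockI[where m = m and k = "n - 1"]) (use assms in \<open>auto simp: sum_distrib_left\<close>)

lemma reduced_marginals_minus:
  assumes "X \<in> carrier_mat m n" "Y \<in> carrier_mat m n"
  shows "reduced_marginals (X - Y) = reduced_marginals X - reduced_marginals Y"
  by (rule eq_vec_blockI[where m = m and k = "n - 1"]) (use assms in \<open>auto simp: sum_subtractf\<close>)

lemma index_alg_T [simp]:
  "i < dim_row P \<Longrightarrow> j < dim_col P \<Longrightarrow> alg_T P G $$ (i,j) = P $$ (i,j) * G $$ (i,j)"
  "dim_row (alg_T P G) = dim_row P" "dim_col (alg_T P G) = dim_col P"
  unfolding alg_T_def by simp_all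

lemma alg_rhs_eq_reduced_marginals: "alg_rhs P G = reduced_marginals (alg_T P G)"
  unfolding alg_rhs_def reduced_marginals_def alg_T_def Let_def by simp

lemma E_tilde_mult_vec:
  assumes n: "n \<ge> 1" and y: "dim_vec y = m + n - 1"
  shows "E_tilde m n *\<^sub>v y = vec_cm (potential_mat m n y)"
proof (rule eq_vecI)
  fix k assume "k < dim_vec (vec_cm (potential_mat m n y))"
  then have k: "k < m * n" by simp
  note mod_div = mod_div_less_if_less_mult[OF k]
  have "(E_tilde m n *\<^sub>v y) $ k = (\<Sum>c<dim_vec y. E_tilde m n $$ (k,c) * y $ c)"
    by (rule index_mult_mat_vec_sum) (use k y in \<open>simp_all add: E_tilde_def\<close>)
  also have "\<dots> = (\<Sum>c<m. E_tilde m n $$ (k,c) * y $ c) + (\<Sum>j<n - 1. E_tilde m n $$ (k, m + j) * y $ (m + j))"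
    using y n by (simp add: sum_lessThan_add flip: Nat.add_diff_assoc)
  also have "\<dots> = (\<Sum>c<m. of_bool (k mod m = c) * y $ c) + (\<Sum>j<n - 1. of_bool (k div m = j) * y $ (m + j))"
    using k n by (intro arg_cong2[where f = "(+)"] sum.cong) (auto simp: E_tilde_def E_mat_def)
  also have "\<dots> = vec_cm (potential_mat m n y) $ k"
    using k mod_div by (simp add: sum.delta)
  finally show "(E_tilde m n *\<^sub>v y) $ k = vec_cm (potential_mat m n y) $ k" .
qed (simp add: E_tilde_def)

lemma transpose_E_tilde_mult_vec_cm:
  assumes X: "X \<in> carrier_mat m n" and n: "n \<ge> 1"
  shows "transpose_mat (E_tilde m n) *\<^sub>v vec_cm X = reduced_marginals X"
proof (rule eq_vec_blockI[where m = m and k = "n - 1"])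
  have dims: "dim_row X = m" "dim_col X = n" using X by auto
  have entry: "(transpose_mat (E_tilde m n) *\<^sub>v vec_cm X) $ c
      = (\<Sum>i<m. \<Sum>j<n. (if c < m then of_bool (i = c) else of_bool (j = c - m)) * X $$ (i,j))"
    if "c < m + (n - 1)" for c
  proof -
    have "(transpose_mat (E_tilde m n) *\<^sub>v vec_cm X) $ c
        = (\<Sum>k<dim_vec (vec_cm X). transpose_mat (E_tilde m n) $$ (c,k) * vec_cm X $ k)"
      by (rule index_mult_mat_vec_sum) (use that dims n in \<open>simp_all add: E_tilde_def\<close>)
    also have "\<dots> = (\<Sum>k<m * n. (if c < m then of_bool (k mod m = c) else of_bool (k div m = c - m))
        * X $$ (k mod m, k div m))"
      using that dims n by (intro sum.cong) (auto simp: E_tilde_def E_mat_def)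
    also have "\<dots> = (\<Sum>i<m. \<Sum>j<n. (if c < m then of_bool (i = c) else of_bool (j = c - m)) * X $$ (i,j))"
      by (rule sum_lessThan_mult_mod_div[where
            f = "\<lambda>i j. (if c < m then of_bool (i = c) else of_bool (j = c - m)) * X $$ (i,j)"])
    finally show ?thesis .
  qed
  show "(transpose_mat (E_tilde m n) *\<^sub>v vec_cm X) $ i = reduced_marginals X $ i" if "i < m" for i
  proof -
    have "(transpose_mat (E_tilde m n) *\<^sub>v vec_cm X) $ i = (\<Sum>i'<m. of_bool (i' = i) * (\<Sum>j<n. X $$ (i',j)))"
      using entry[of i] that by (simp add: sum_distrib_left)
    then show ?thesis using that dims by (simp add: sum.delta)
  qed
  show "(transpose_mat (E_tilde m n) *\<^sub>v vec_cm X) $ (m + j) = reduced_marginals X $ (m + j)" if "j < n - 1" for j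
    using entry[of "m + j"] that dims by simp
qed (use X n in \<open>auto simp: E_tilde_def\<close>)

lemma reduced_marginals_scalar_prod:
  assumes X: "X \<in> carrier_mat m n" and n: "n \<ge> 1" and y: "dim_vec y = m + n - 1"
  shows "reduced_marginals X \<bullet> y = (\<Sum>i<m. \<Sum>j<n. X $$ (i,j) * potential_mat m n y $$ (i,j))"
proof -
  have "reduced_marginals X \<bullet> y = (transpose_mat (E_tilde m n) *\<^sub>v vec_cm X) \<bullet> y"
    by (simp only: transpose_E_tilde_mult_vec_cm[OF X n])
  also have "\<dots> = vec_cm X \<bullet> (E_tilde m n *\<^sub>v y)"
  proof (rule transpose_vec_mult_scalar)
    show "E_tilde m n \<in> carrier_mat (m * n) (m + n - 1)" by (simp add: E_tilde_def)
    show "vec_cm X \<in> carrier_vec (m * n)" using X by (intro carrier_vecI) auto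
    show "y \<in> carrier_vec (m + n - 1)" using y by (rule carrier_vecI)
  qed
  also have "\<dots> = vec_cm X \<bullet> vec_cm (potential_mat m n y)"
    by (simp only: E_tilde_mult_vec[OF n y])
  also have "\<dots> = (\<Sum>i<m. \<Sum>j<n. X $$ (i,j) * potential_mat m n y $$ (i,j))"
    by (rule scalar_prod_vec_cm[OF X potential_mat_carrier])
  finally show ?thesis .
qed

lemma alg_K_carrier:
  assumes "P \<in> carrier_mat (dim_vec a) (dim_vec b)" and "dim_vec b \<ge> 1"
  shows "alg_K P a b \<in> carrier_mat (dim_vec a + dim_vec b - 1) (dim_vec a + dim_vec b - 1)"
  using assms unfolding alg_K_def diag_of_def Let_def by auto

lemma index_alg_K_mult_vec:
  assumes P: "P \<in> carrier_mat m n" and a: "dim_vec a = m" and b: "dim_vec b = n"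
    and n: "n \<ge> 1" and y: "dim_vec y = m + n - 1"
  shows "i < m \<Longrightarrow> (alg_K P a b *\<^sub>v y) $ i = a $ i * y $ i + (\<Sum>j<n - 1. P $$ (i,j) * y $ (m + j))"
    and "j < n - 1 \<Longrightarrow> (alg_K P a b *\<^sub>v y) $ (m + j) = (\<Sum>i<m. P $$ (i,j) * y $ i) + b $ j * y $ (m + j)"
proof -
  let ?K = "alg_K P a b"
  have dims: "dim_row P = m" "dim_col P = n" using P by auto
  have K: "?K \<in> carrier_mat (m + (n - 1)) (m + (n - 1))"
    using alg_K_carrier[of P a b] P a b n by simp
  have K_entry: "?K $$ (r,c) = (if r < m then if c < m then (if r = c then a $ r else 0) else P $$ (r, c - m)
      else if c < m then P $$ (c, r - m) else (if r = c then b $ (r - m) else 0))"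
    if "r < m + (n - 1)" "c < m + (n - 1)" for r c
    unfolding alg_K_def diag_of_def Let_def using a b dims that by auto
  have K_mult: "(?K *\<^sub>v y) $ r = (\<Sum>c<m. ?K $$ (r,c) * y $ c) + (\<Sum>l<n - 1. ?K $$ (r, m + l) * y $ (m + l))"
    if "r < m + (n - 1)" for r
  proof -
    have "(?K *\<^sub>v y) $ r = (\<Sum>c<m + (n - 1). ?K $$ (r,c) * y $ c)"
      using index_mult_mat_vec_sum[of r ?K y] that K y n by simp
    then show ?thesis by (simp only: sum_lessThan_add)
  qed
  show "(?K *\<^sub>v y) $ i = a $ i * y $ i + (\<Sum>j<n - 1. P $$ (i,j) * y $ (m + j))" if i: "i < m"
  proof -
    have "(?K *\<^sub>v y) $ i = (\<Sum>c<m. ?K $$ (i,c) * y $ c) + (\<Sum>l<n - 1. ?K $$ (i, m + l) * y $ (m + l))"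
      by (rule K_mult) (use i in simp)
    also have "\<dots> = (\<Sum>c<m. if i = c then a $ i * y $ c else 0) + (\<Sum>j<n - 1. P $$ (i,j) * y $ (m + j))"
      using i by (intro arg_cong2[where f = "(+)"] sum.cong) (auto simp: K_entry)
    finally show ?thesis using i by (simp add: sum.delta)
  qed
  show "(?K *\<^sub>v y) $ (m + j) = (\<Sum>i<m. P $$ (i,j) * y $ i) + b $ j * y $ (m + j)" if j: "j < n - 1"
  proof -
    have "(?K *\<^sub>v y) $ (m + j)
        = (\<Sum>c<m. ?K $$ (m + j, c) * y $ c) + (\<Sum>l<n - 1. ?K $$ (m + j, m + l) * y $ (m + l))"
      by (rule K_mult) (use j in simp)
    also have "\<dots> = (\<Sum>i<m. P $$ (i,j) * y $ i) + (\<Sum>l<n - 1. if j = l then b $ j * y $ (m + l) else 0)"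
      using j by (intro arg_cong2[where f = "(+)"] sum.cong) (auto simp: K_entry)
    finally show ?thesis using j by simp
  qed
qed

lemma alg_K_mult_vec:
  assumes P: "P \<in> transport_polytope a b" and a: "dim_vec a = m" and b: "dim_vec b = n"
    and n: "n \<ge> 1" and y: "dim_vec y = m + n - 1"
  shows "alg_K P a b *\<^sub>v y = reduced_marginals (alg_T P (potential_mat m n y))"
proof (rule eq_vec_blockI[where m = m and k = "n - 1"])
  note P_props = transport_polytopeD[OF P, unfolded a b]
  note K_index = index_alg_K_mult_vec[OF P_props(1) a b n y]
  have dims: "dim_row P = m" "dim_col P = n" using P_props(1) by auto
  show "dim_vec (alg_K P a b *\<^sub>v y) = m + (n - 1)"
    using alg_K_carrier[OF transport_polytopeD(1)[OF P]] a b n by simp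
  show "dim_vec (reduced_marginals (alg_T P (potential_mat m n y))) = m + (n - 1)"
    using dims by simp
  show "(alg_K P a b *\<^sub>v y) $ i = reduced_marginals (alg_T P (potential_mat m n y)) $ i" if i: "i < m" for i
  proof -
    have "(alg_K P a b *\<^sub>v y) $ i
        = (\<Sum>j<n. P $$ (i,j)) * y $ i + (\<Sum>j<n. P $$ (i,j) * (if j < n - 1 then y $ (m + j) else 0))"
      using K_index(1)[OF i] P_props(3)[OF i] sum_mult_if_less_pred[OF n, of "\<lambda>j. P $$ (i,j)" "\<lambda>j. y $ (m + j)"]
      by simp
    also have "\<dots> = (\<Sum>j<n. P $$ (i,j) * potential_mat m n y $$ (i,j))"
      using i by (simp add: sum_distrib_right distrib_left sum.distrib)
    finally show ?thesis using i dims by simp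
  qed
  show "(alg_K P a b *\<^sub>v y) $ (m + j) = reduced_marginals (alg_T P (potential_mat m n y)) $ (m + j)"
    if j: "j < n - 1" for j
  proof -
    have "(alg_K P a b *\<^sub>v y) $ (m + j) = (\<Sum>i<m. P $$ (i,j) * y $ i) + (\<Sum>i<m. P $$ (i,j)) * y $ (m + j)"
      using K_index(2)[OF j] P_props(4)[of j] j by simp
    also have "\<dots> = (\<Sum>i<m. P $$ (i,j) * potential_mat m n y $$ (i,j))"
      using j by (simp add: sum_distrib_right distrib_left sum.distrib)
    finally show ?thesis using j dims by simp
  qed
qed

lemma alg_K_trivial_kernel:
  assumes P: "P \<in> transport_polytope a b" and a: "dim_vec a = m" and b: "dim_vec b = n"
    and m: "m \<ge> 1" and n: "n \<ge> 1" and P_pos: "\<forall>i<m. \<forall>j<n. P $$ (i,j) > 0"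
    and y: "dim_vec y = m + n - 1" and Ky: "alg_K P a b *\<^sub>v y = 0\<^sub>v (m + n - 1)"
  shows "y = 0\<^sub>v (m + n - 1)"
proof -
  have Pc: "P \<in> carrier_mat m n" using transport_polytopeD(1)[OF P] a b by simp
  define U where "U = potential_mat m n y"
  have T: "alg_T P U \<in> carrier_mat m n" using Pc by (intro carrier_matI) auto
  have "(\<Sum>i<m. \<Sum>j<n. P $$ (i,j) * (U $$ (i,j))\<^sup>2) = reduced_marginals (alg_T P U) \<bullet> y"
    unfolding reduced_marginals_scalar_prod[OF T n y] using Pc
    by (intro sum.cong refl) (simp add: U_def power2_eq_square mult.assoc)
  also have "\<dots> = 0"
    using Ky carrier_vecI[OF y] unfolding U_def alg_K_mult_vec[OF P a b n y, symmetric] by simp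
  finally have sum_zero: "(\<Sum>i<m. \<Sum>j<n. P $$ (i,j) * (U $$ (i,j))\<^sup>2) = 0" .
  have U_zero: "U $$ (i,j) = 0" if "i < m" "j < n" for i j
  proof -
    have "P $$ (i,j) * (U $$ (i,j))\<^sup>2 = 0"
    proof (rule sum_sum_nonneg_eq_0D[of "{..<m}" "{..<n}" "\<lambda>k l. P $$ (k,l) * (U $$ (k,l))\<^sup>2"])
      show "0 \<le> P $$ (k,l) * (U $$ (k,l))\<^sup>2" if "k \<in> {..<m}" "l \<in> {..<n}" for k l
        using P_pos that by (simp add: less_imp_le)
    qed (use sum_zero that in simp_all)
    moreover have "P $$ (i,j) > 0" using P_pos that by blast
    ultimately show ?thesis by simp
  qed
  have "U = 0\<^sub>m m n"
  proof (rule eq_matI)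
    fix i j assume "i < dim_row (0\<^sub>m m n :: real mat)" "j < dim_col (0\<^sub>m m n :: real mat)"
    then show "U $$ (i,j) = 0\<^sub>m m n $$ (i,j)" using U_zero by simp
  qed (simp_all add: U_def)
  then show ?thesis unfolding U_def by (rule potential_mat_eq_zeroD[OF m n y])
qed

lemma invertible_alg_K:
  assumes P: "P \<in> transport_polytope a b" and a: "dim_vec a = m" and b: "dim_vec b = n"
    and m: "m \<ge> 1" and n: "n \<ge> 1" and P_pos: "\<forall>i<m. \<forall>j<n. P $$ (i,j) > 0"
  shows "invertible_mat (alg_K P a b)"
proof -
  have "alg_K P a b \<in> carrier_mat (m + n - 1) (m + n - 1)"
    using alg_K_carrier[OF transport_polytopeD(1)[OF P]] a b n by simp
  then show ?thesis
    using alg_K_trivial_kernel[OF P a b m n P_pos] by (rule invertible_mat_if_trivial_kernel) auto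
qed

section \<open>The KKT system\<close>

lemma KKT_mat_mult_vec:
  assumes P: "P \<in> carrier_mat m n" and n: "n \<ge> 1" and x: "dim_vec x = m * n" and y: "dim_vec y = m + n - 1"
  shows "KKT_mat lam P *\<^sub>v (x @\<^sub>v - y)
    = (vec (m * n) (\<lambda>k. lam / vec_cm P $ k * x $ k) - vec_cm (potential_mat m n y))
      @\<^sub>v (transpose_mat (E_tilde m n) *\<^sub>v x)"
proof -
  let ?D = "mat (m * n) (m * n) (\<lambda>(i,j). if i = j then lam / vec_cm P $ i else 0)"
  let ?E = "E_tilde m n"
  have E: "?E \<in> carrier_mat (m * n) (m + n - 1)" by (simp add: E_tilde_def)
  have xc: "x \<in> carrier_vec (m * n)" and yc: "- y \<in> carrier_vec (m + n - 1)"
    using x y by (auto intro: carrier_vecI)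
  have blocks: "KKT_mat lam P *\<^sub>v (x @\<^sub>v - y)
      = (?D *\<^sub>v x + ?E *\<^sub>v (- y)) @\<^sub>v (transpose_mat ?E *\<^sub>v x + 0\<^sub>m (m + n - 1) (m + n - 1) *\<^sub>v (- y))"
    unfolding KKT_mat_def Let_def carrier_matD[OF P]
    by (intro four_block_mat_mult_vec[OF _ E _ _ xc yc]) (use E in auto)
  have D: "?D *\<^sub>v x = vec (m * n) (\<lambda>k. lam / vec_cm P $ k * x $ k)"
  proof (rule eq_vecI)
    fix k assume "k < dim_vec (vec (m * n) (\<lambda>k. lam / vec_cm P $ k * x $ k))"
    then have k: "k < m * n" by simp
    have "(?D *\<^sub>v x) $ k = (\<Sum>c<dim_vec x. ?D $$ (k,c) * x $ c)"
      by (rule index_mult_mat_vec_sum) (use k x in simp_all)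
    also have "\<dots> = (\<Sum>c<m * n. if c = k then lam / vec_cm P $ k * x $ k else 0)"
      using x k by (intro sum.cong) auto
    finally show "(?D *\<^sub>v x) $ k = vec (m * n) (\<lambda>k. lam / vec_cm P $ k * x $ k) $ k"
      using k by simp
  qed simp
  have E_y: "?E *\<^sub>v (- y) = - vec_cm (potential_mat m n y)"
  proof -
    have "?E *\<^sub>v (- y) = - (?E *\<^sub>v y)"
      by (rule eq_vecI) (use E y in auto)
    then show ?thesis by (simp only: E_tilde_mult_vec[OF n y])
  qed
  have zero: "0\<^sub>m (m + n - 1) (m + n - 1) *\<^sub>v (- y) = 0\<^sub>v (m + n - 1)"
    by (rule eq_vecI) (use y in \<open>auto simp: scalar_prod_def\<close>)
  have "transpose_mat ?E *\<^sub>v x + 0\<^sub>v (m + n - 1) = transpose_mat ?E *\<^sub>v x"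
    by (rule right_zero_vec) (use E in \<open>simp add: carrier_vecI\<close>)
  moreover have "vec (m * n) (\<lambda>k. lam / vec_cm P $ k * x $ k) + - vec_cm (potential_mat m n y)
      = vec (m * n) (\<lambda>k. lam / vec_cm P $ k * x $ k) - vec_cm (potential_mat m n y)"
    by (rule minus_add_uminus_vec[symmetric, where n = "m * n"]) (auto intro: carrier_vecI)
  ultimately show ?thesis
    unfolding blocks D E_y zero by (simp only:)
qed

definition cost_gradient :: "real \<Rightarrow> real mat \<Rightarrow> real mat \<Rightarrow> real vec \<Rightarrow> real mat" where
  "cost_gradient lam P G y =
     - (1 / lam) \<cdot>\<^sub>m (alg_T P G - alg_T P (potential_mat (dim_row P) (dim_col P) y))"

lemma cost_gradient_carrier:
  "P \<in> carrier_mat m n \<Longrightarrow> cost_gradient lam P G y \<in> carrier_mat m n"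
  unfolding cost_gradient_def alg_T_def by auto

lemma index_cost_gradient:
  assumes "P \<in> carrier_mat m n" "i < m" "j < n"
  shows "cost_gradient lam P G y $$ (i,j) = P $$ (i,j) * (potential_mat m n y $$ (i,j) - G $$ (i,j)) / lam"
  using assms unfolding cost_gradient_def by (simp add: field_split_simps)

lemma alg_GC_eq_cost_gradient: "alg_GC lam P a b G = cost_gradient lam P G (alg_g P a b G)"
  by (rule eq_matI) (auto simp: alg_GC_def cost_gradient_def potential_mat_def alg_T_def Let_def)

lemma reduced_marginals_cost_gradient:
  assumes P: "P \<in> transport_polytope a b" and a: "dim_vec a = m" and b: "dim_vec b = n"
    and n: "n \<ge> 1" and y: "dim_vec y = m + n - 1"
  shows "reduced_marginals (cost_gradient lam P G y) = - (1 / lam) \<cdot>\<^sub>v (alg_rhs P G - alg_K P a b *\<^sub>v y)"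
proof -
  have Pc: "P \<in> carrier_mat m n" using transport_polytopeD(1)[OF P] a b by simp
  have T: "alg_T P H \<in> carrier_mat m n" for H using Pc by (intro carrier_matI) auto
  have "reduced_marginals (cost_gradient lam P G y)
      = - (1 / lam) \<cdot>\<^sub>v reduced_marginals (alg_T P G - alg_T P (potential_mat m n y))"
    unfolding cost_gradient_def carrier_matD[OF Pc] by (rule reduced_marginals_smult) (use T in auto)
  also have "\<dots> = - (1 / lam) \<cdot>\<^sub>v (alg_rhs P G - alg_K P a b *\<^sub>v y)"
    unfolding reduced_marginals_minus[OF T T] alg_rhs_eq_reduced_marginals alg_K_mult_vec[OF P a b n y] ..
  finally show ?thesis .
qed

lemma KKT_solution_iff:
  assumes P: "P \<in> transport_polytope a b" and a: "dim_vec a = m" and b: "dim_vec b = n" and n: "n \<ge> 1"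
    and P_pos: "\<forall>i<m. \<forall>j<n. P $$ (i,j) > 0" and lam: "lam > 0" and G: "G \<in> carrier_mat m n"
    and x: "dim_vec x = m * n" and y: "dim_vec y = m + n - 1"
  shows "KKT_mat lam P *\<^sub>v (x @\<^sub>v - y) = (- vec_cm G) @\<^sub>v 0\<^sub>v (m + n - 1)
    \<longleftrightarrow> x = vec_cm (cost_gradient lam P G y) \<and> alg_K P a b *\<^sub>v y = alg_rhs P G"
proof -
  have Pc: "P \<in> carrier_mat m n" using transport_polytopeD(1)[OF P] a b by simp
  let ?X = "cost_gradient lam P G y"
  have X: "?X \<in> carrier_mat m n" using Pc by (rule cost_gradient_carrier)
  have first_block: "vec (m * n) (\<lambda>k. lam / vec_cm P $ k * x $ k) - vec_cm (potential_mat m n y) = - vec_cm G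
      \<longleftrightarrow> x = vec_cm ?X"
  proof -
    have "lam / vec_cm P $ k * x $ k - vec_cm (potential_mat m n y) $ k = - vec_cm G $ k
        \<longleftrightarrow> x $ k = vec_cm ?X $ k" if k: "k < m * n" for k
    proof -
      note mod_div = mod_div_less_if_less_mult[OF k]
      then have "vec_cm P $ k > 0" using P_pos k Pc by simp
      with lam show ?thesis
        using k mod_div Pc G X by (simp add: index_cost_gradient[OF Pc] field_simps)
    qed
    then show ?thesis using x Pc G X by (auto simp: vec_eq_iff)
  qed
  have second_block: "transpose_mat (E_tilde m n) *\<^sub>v vec_cm ?X = 0\<^sub>v (m + n - 1)
      \<longleftrightarrow> alg_K P a b *\<^sub>v y = alg_rhs P G"
  proof -
    have "transpose_mat (E_tilde m n) *\<^sub>v vec_cm ?X = - (1 / lam) \<cdot>\<^sub>v (alg_rhs P G - alg_K P a b *\<^sub>v y)"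
      using transpose_E_tilde_mult_vec_cm[OF X n] reduced_marginals_cost_gradient[OF P a b n y] by simp
    moreover have "dim_vec (alg_rhs P G) = m + n - 1" "dim_vec (alg_K P a b *\<^sub>v y) = m + n - 1"
      using alg_K_mult_vec[OF P a b n y] Pc n by (simp_all add: alg_rhs_eq_reduced_marginals)
    ultimately show ?thesis using lam by (auto simp: vec_eq_iff)
  qed
  have "KKT_mat lam P *\<^sub>v (x @\<^sub>v - y) = (- vec_cm G) @\<^sub>v 0\<^sub>v (m + n - 1)
      \<longleftrightarrow> x = vec_cm ?X \<and> transpose_mat (E_tilde m n) *\<^sub>v x = 0\<^sub>v (m + n - 1)"
    unfolding KKT_mat_mult_vec[OF Pc n x y] first_block[symmetric]
    by (rule append_vec_eq) (use G in \<open>auto intro: carrier_vecI\<close>)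
  then show ?thesis using second_block by auto
qed

theorem theorem2:
  fixes m n :: nat and lam :: real and C G P :: "real mat" and a b :: "real vec"
  assumes "m \<ge> 2" and "n \<ge> 2" and "lam > 0"
    and "C \<in> carrier_mat m n" and "G \<in> carrier_mat m n"
    and "in_simplex m a" and "in_simplex n b"
    and "\<forall>i<m. a $ i > 0" and "\<forall>j<n. b $ j > 0"
    and "is_sinkhorn_solution lam C a b P"
  shows "invertible_mat (alg_K P a b)
    \<and> KKT_mat lam P *\<^sub>v (vec_cm (alg_GC lam P a b G) @\<^sub>v (- alg_g P a b G))
        = (- vec_cm G) @\<^sub>v 0\<^sub>v (m+n-1)
    \<and> (\<forall>x y. dim_vec x = m*n \<longrightarrow> dim_vec y = m+n-1 \<longrightarrow>
         KKT_mat lam P *\<^sub>v (x @\<^sub>v (- y)) = (- vec_cm G) @\<^sub>v 0\<^sub>v (m+n-1) \<longrightarrow>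
         x = vec_cm (alg_GC lam P a b G) \<and> y = alg_g P a b G)"
proof -
  have a: "dim_vec a = m" and b: "dim_vec b = n" and m: "m \<ge> 1" and n: "n \<ge> 1"
    using assms(1,2,6,7) unfolding in_simplex_def by auto
  have P: "P \<in> transport_polytope a b"
    using assms(10) unfolding is_sinkhorn_solution_def by simp
  have P_pos: "\<forall>i<m. \<forall>j<n. P $$ (i,j) > 0"
    using sinkhorn_solution_pos[OF assms(3) _ _ assms(10)] assms(8,9) a b by simp
  have K: "alg_K P a b \<in> carrier_mat (m + n - 1) (m + n - 1)"
    using alg_K_carrier[OF transport_polytopeD(1)[OF P]] a b n by simp
  have inv: "invertible_mat (alg_K P a b)" by (rule invertible_alg_K[OF P a b m n P_pos])
  have dims: "dim_vec (alg_g P a b G) = m + n - 1" "dim_vec (vec_cm (alg_GC lam P a b G)) = m * n"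
    "dim_vec (alg_rhs P G) = m + n - 1"
    using mat_inv_inverts(1)[OF inv] K transport_polytopeD(1)[OF P] a b n
    by (auto simp: alg_g_def alg_GC_eq_cost_gradient cost_gradient_def alg_rhs_eq_reduced_marginals)
  have g_iff: "y = alg_g P a b G \<longleftrightarrow> alg_K P a b *\<^sub>v y = alg_rhs P G" if "dim_vec y = m + n - 1" for y
    unfolding alg_g_def by (rule mat_inv_mult_vec_iff[OF inv]) (use that K dims in auto)
  have "KKT_mat lam P *\<^sub>v (x @\<^sub>v - y) = (- vec_cm G) @\<^sub>v 0\<^sub>v (m + n - 1)
      \<longleftrightarrow> x = vec_cm (cost_gradient lam P G y) \<and> y = alg_g P a b G"
    if "dim_vec x = m * n" "dim_vec y = m + n - 1" for x y
    using KKT_solution_iff[OF P a b n P_pos assms(3,5) that] g_iff[OF that(2)] by blast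
  then show ?thesis using inv dims by (auto simp: alg_GC_eq_cost_gradient)
qed

end
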